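(* Let $T$ be a $\mathbb{Z}_2^2$-cordial tree with $4k$ vertices for some $k\in\mathbb{N}$, and let $T^*$ be a tree containing $T$ as an induced subgraph with $|V(T^* )|\le 4k+3$. Then $T^*$ is $\mathbb{Z}_2^2$-cordial.
   Context: $\mathbb{N}=\mathbb{Z}_{\ge0}$. $\mathbb{Z}_2^2=\mathbb{Z}_2\times\mathbb{Z}_2$ is the Klein four-group. For an abelian group $A$ and a graph $G=(V,E)$, a vertex labeling $\ell:V\to A$ induces an edge labeling $\ell(\{v_1,v_2\})=\ell(v_1)+\ell(v_2)$. Let $f_V(a)=|\{v\in V:\ell(v)=a\}|$ and $f_E(a)=|\{e\in E:\ell(e)=a\}|$. The labeling is $A$-cordial if $|f_V(a_1)-f_V(a_2)|\le 1$ and $|f_E(a_1)-f_E(a_2)|\le 1$ for all $a_1,a_2\in A$; $G$ is $A$-cordial if it admits an $A$-cordial labeling. *)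

theory Defs
  imports Main "HOL-Library.Z2" "HOL-Library.Product_Plus"
begin

definition simple_graph :: "'a set \<Rightarrow> 'a set set \<Rightarrow> bool" where
  "simple_graph V E \<longleftrightarrow> finite V \<and>
     (\<forall>e\<in>E. \<exists>u v. u \<noteq> v \<and> u \<in> V \<and> v \<in> V \<and> e = {u, v})"

definition adj :: "'a set set \<Rightarrow> 'a \<Rightarrow> 'a \<Rightarrow> bool" where
  "adj E u v \<longleftrightarrow> u \<noteq> v \<and> {u, v} \<in> E"

definition graph_connected :: "'a set \<Rightarrow> 'a set set \<Rightarrow> bool" where
  "graph_connected V E \<longleftrightarrow> (\<forall>u\<in>V. \<forall>v\<in>V. (adj E)\<^sup>*\<^sup>* u v)"

definition is_cycle :: "'a set set \<Rightarrow> 'a list \<Rightarrow> bool" where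
  "is_cycle E xs \<longleftrightarrow> length xs \<ge> 3 \<and> distinct xs \<and>
     (\<forall>i. Suc i < length xs \<longrightarrow> adj E (xs ! i) (xs ! Suc i)) \<and>
     adj E (last xs) (hd xs)"

definition acyclic_graph :: "'a set set \<Rightarrow> bool" where
  "acyclic_graph E \<longleftrightarrow> (\<nexists>xs. is_cycle E xs)"

definition is_tree :: "'a set \<Rightarrow> 'a set set \<Rightarrow> bool" where
  "is_tree V E \<longleftrightarrow> simple_graph V E \<and> V \<noteq> {} \<and> graph_connected V E \<and> acyclic_graph E"

definition induced_subgraph :: "'a set \<Rightarrow> 'a set set \<Rightarrow> 'a set \<Rightarrow> 'a set set \<Rightarrow> bool" where
  "induced_subgraph V E V' E' \<longleftrightarrow> V \<subseteq> V' \<and> E = {e \<in> E'. e \<subseteq> V}"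

text \<open>The Klein four-group Z_2 x Z_2 is rendered as the additive group of bit \<times> bit.\<close>
type_synonym klein = "bit \<times> bit"

definition fV :: "'a set \<Rightarrow> ('a \<Rightarrow> klein) \<Rightarrow> klein \<Rightarrow> nat" where
  "fV V l a = card {v \<in> V. l v = a}"

text \<open>Induced edge label: l({v1,v2}) = l v1 + l v2 (well defined since + is commutative).\<close>
definition fE :: "'a set set \<Rightarrow> ('a \<Rightarrow> klein) \<Rightarrow> klein \<Rightarrow> nat" where
  "fE E l a = card {e \<in> E. \<exists>u v. e = {u, v} \<and> u \<noteq> v \<and> l u + l v = a}"

definition klein_cordial_labeling :: "'a set \<Rightarrow> 'a set set \<Rightarrow> ('a \<Rightarrow> klein) \<Rightarrow> bool" where
  "klein_cordial_labeling V E l \<longleftrightarrow>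
     (\<forall>a1 a2. \<bar>int (fV V l a1) - int (fV V l a2)\<bar> \<le> 1 \<and>
              \<bar>int (fE E l a1) - int (fE E l a2)\<bar> \<le> 1)"

definition klein_cordial :: "'a set \<Rightarrow> 'a set set \<Rightarrow> bool" where
  "klein_cordial V E \<longleftrightarrow> (\<exists>l. klein_cordial_labeling V E l)"

end

theory Submission
  imports Defs
begin

text \<open>A connected induced subtree of a tree can be grown to the whole tree by attaching one
  leaf at a time, so \<open>T\<^sup>*\<close> arises from \<open>T\<close> by at most three leaf additions, each made to a tree
  with \<open>n \<in> {4k, 4k + 1, 4k + 2}\<close> vertices. For a balanced count over the four labels the
  number of least frequent labels is \<open>4 - (total mod 4)\<close>. A cordial tree with \<open>n\<close> vertices
  and \<open>n - 1\<close> edges therefore has \<open>4 - n mod 4\<close> least frequent vertex labels and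
  \<open>4 - (n - 1) mod 4\<close> least frequent edge labels, together more than four when
  \<open>n mod 4 \<noteq> 3\<close>. Hence, if the new leaf hangs off \<open>x\<close>, some least frequent vertex label
  \<open>c\<close> makes \<open>l x + c\<close> a least frequent edge label, and labelling the leaf with \<open>c\<close> keeps
  the labeling cordial.\<close>

section \<open>Growing a tree leaf by leaf\<close>

abbreviation induced_edges :: "'a set set \<Rightarrow> 'a set \<Rightarrow> 'a set set" where
  "induced_edges E S \<equiv> {e \<in> E. e \<subseteq> S}"

lemma rtranclp_imp_distinct_path:
  "R\<^sup>*\<^sup>* a b \<Longrightarrow>
     \<exists>xs. xs \<noteq> [] \<and> hd xs = a \<and> last xs = b \<and> distinct xs \<and> successively R xs"
proof (induction rule: converse_rtranclp_induct)
  case base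
  show ?case by (intro exI[of _ "[b]"]) auto
next
  case (step a c)
  then obtain ys where ys: "ys \<noteq> []" "hd ys = c" "last ys = b" "distinct ys" "successively R ys"
    by blast
  show ?case
  proof (cases "a \<in> set ys")
    case True
    then obtain us vs where "ys = us @ a # vs" by (meson split_list)
    with ys show ?thesis by (intro exI[of _ "a # vs"]) (auto simp: successively_append_iff)
  next
    case False
    with ys step(1) show ?thesis by (intro exI[of _ "a # ys"]) (auto simp: successively_Cons)
  qed
qed

lemma rtranclp_exits_set:
  "R\<^sup>*\<^sup>* u v \<Longrightarrow> u \<in> S \<Longrightarrow> v \<notin> S \<Longrightarrow> \<exists>x y. x \<in> S \<and> y \<notin> S \<and> R x y"
proof (induction rule: rtranclp_induct)
  case (step w v)
  then show ?case by (cases "w \<in> S") auto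
qed auto

lemma adj_mono: "E \<subseteq> F \<Longrightarrow> adj E \<le> adj F"
  by (auto simp: adj_def)

lemma rtranclp_adj_mono: "E \<subseteq> F \<Longrightarrow> (adj E)\<^sup>*\<^sup>* u v \<Longrightarrow> (adj F)\<^sup>*\<^sup>* u v"
  using rtranclp_mono[OF adj_mono] by (rule predicate2D)

lemma acyclic_no_detour:
  assumes acyclic: "acyclic_graph E" and ab: "adj E a b"
  shows "\<not> (adj (E - {{a, b}}))\<^sup>*\<^sup>* a b"
proof
  assume "(adj (E - {{a, b}}))\<^sup>*\<^sup>* a b"
  then obtain xs where xs: "xs \<noteq> []" "hd xs = a" "last xs = b" "distinct xs"
    and path: "successively (adj (E - {{a, b}})) xs"
    using rtranclp_imp_distinct_path by metis
  have "a \<noteq> b" using ab by (simp add: adj_def)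
  have "length xs \<ge> 3"
  proof (rule ccontr)
    assume "\<not> length xs \<ge> 3"
    moreover have "length xs \<noteq> 0" using xs(1) by simp
    ultimately consider "length xs = 1" | "length xs = 2" by linarith
    then show False
    proof cases
      case 1
      then obtain z where "xs = [z]" by (cases xs) auto
      with xs \<open>a \<noteq> b\<close> show False by simp
    next
      case 2
      then obtain z w where "xs = [z, w]" by (cases xs; cases "tl xs") auto
      with xs path show False by (auto simp: adj_def)
    qed
  qed
  moreover have "successively (adj E) xs"
    using path by (rule successively_mono) (auto simp: adj_def)
  moreover have "adj E (last xs) (hd xs)"
    using ab xs by (auto simp: adj_def insert_commute)
  ultimately have "is_cycle E xs"
    using xs(4) successively_nth unfolding is_cycle_def by blast
  with acyclic show False unfolding acyclic_graph_def by blast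
qed

lemma is_cycle_mono: "is_cycle E xs \<Longrightarrow> E \<subseteq> F \<Longrightarrow> is_cycle F xs"
  unfolding is_cycle_def by (auto dest: predicate2D[OF adj_mono])

lemma acyclic_graph_subset: "acyclic_graph E \<Longrightarrow> F \<subseteq> E \<Longrightarrow> acyclic_graph F"
  unfolding acyclic_graph_def using is_cycle_mono by blast

lemma simple_graph_edge:
  "simple_graph V E \<Longrightarrow> e \<in> E \<Longrightarrow> \<exists>u v. u \<noteq> v \<and> u \<in> V \<and> v \<in> V \<and> e = {u, v}"
  by (simp add: simple_graph_def)

lemma simple_graph_adj: "simple_graph V E \<Longrightarrow> adj E x y \<Longrightarrow> x \<in> V \<and> y \<in> V"
  unfolding simple_graph_def adj_def by (metis doubleton_eq_iff)

lemma simple_graph_edges_subset_Pow: "simple_graph V E \<Longrightarrow> E \<subseteq> Pow V"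
  unfolding simple_graph_def by fastforce

lemma simple_graph_finite_edges: "simple_graph V E \<Longrightarrow> finite E"
  by (meson finite_Pow_iff finite_subset simple_graph_def simple_graph_edges_subset_Pow)

lemma induced_edges_all: "simple_graph V E \<Longrightarrow> induced_edges E V = E"
  using simple_graph_edges_subset_Pow by blast

lemma simple_graph_induced:
  assumes sg: "simple_graph V E" and S: "S \<subseteq> V"
  shows "simple_graph S (induced_edges E S)"
  unfolding simple_graph_def
proof (intro conjI ballI)
  show "finite S" using sg S finite_subset by (auto simp: simple_graph_def)
  fix e assume "e \<in> induced_edges E S"
  then obtain u v where "u \<noteq> v" "e = {u, v}" "e \<subseteq> S"
    using simple_graph_edge[OF sg] by blast
  then show "\<exists>u v. u \<noteq> v \<and> u \<in> S \<and> v \<in> S \<and> e = {u, v}" by blast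
qed

lemma is_tree_induced:
  assumes "is_tree V E" "S \<subseteq> V" "S \<noteq> {}" "graph_connected S (induced_edges E S)"
  shows "is_tree S (induced_edges E S)"
  using assms simple_graph_induced acyclic_graph_subset[of E "induced_edges E S"]
  unfolding is_tree_def by blast

lemma graph_connected_insert_edge:
  assumes con: "graph_connected S F" and x: "x \<in> S"
  shows "graph_connected (insert y S) (insert {x, y} F)"
  unfolding graph_connected_def
proof (intro ballI)
  let ?R = "adj (insert {x, y} F)"
  have lift: "?R\<^sup>*\<^sup>* p q" if "p \<in> S" "q \<in> S" for p q
    using con that rtranclp_adj_mono[of F "insert {x, y} F"]
    unfolding graph_connected_def by blast
  have "?R\<^sup>*\<^sup>* y x \<and> ?R\<^sup>*\<^sup>* x y"
  proof (cases "x = y")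
    case False
    then have "?R y x" "?R x y" by (auto simp: adj_def insert_commute)
    then show ?thesis by blast
  qed simp
  then have "?R\<^sup>*\<^sup>* w x \<and> ?R\<^sup>*\<^sup>* x w" if "w \<in> insert y S" for w
    using that lift x by blast
  then show "?R\<^sup>*\<^sup>* u v" if "u \<in> insert y S" "v \<in> insert y S" for u v
    using that rtranclp_trans by metis
qed

text \<open>Growing a connected part \<open>S\<close> of a tree by a neighbour \<open>y\<close> of \<open>x \<in> S\<close> creates
  no edge besides \<open>{x, y}\<close>: any other edge \<open>{z, y}\<close> would close a cycle through \<open>S\<close>.\<close>

lemma induced_edges_insert_leaf:
  assumes sg: "simple_graph V E" and acyclic: "acyclic_graph E"
    and con: "graph_connected S (induced_edges E S)"
    and x: "x \<in> S" and y: "y \<notin> S" and xy: "{x, y} \<in> E"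
  shows "induced_edges E (insert y S) = insert {x, y} (induced_edges E S)"
proof (intro equalityI subsetI)
  fix e assume e: "e \<in> induced_edges E (insert y S)"
  show "e \<in> insert {x, y} (induced_edges E S)"
  proof (cases "y \<in> e")
    case True
    from e obtain u v where "u \<noteq> v" "e = {u, v}"
      using simple_graph_edge[OF sg] by blast
    with True obtain z where z: "e = {z, y}" "z \<noteq> y"
      by (auto simp: insert_commute)
    with e have "z \<in> S" by auto
    show ?thesis
    proof (rule ccontr)
      assume "e \<notin> insert {x, y} (induced_edges E S)"
      then have "z \<noteq> x" using z by auto
      have "induced_edges E S \<subseteq> E - {{z, y}}"
        using y by auto
      moreover have "(adj (induced_edges E S))\<^sup>*\<^sup>* z x"
        using con \<open>z \<in> S\<close> x unfolding graph_connected_def by blast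
      ultimately have "(adj (E - {{z, y}}))\<^sup>*\<^sup>* z x"
        by (rule rtranclp_adj_mono)
      moreover have "adj (E - {{z, y}}) x y"
        using xy \<open>z \<noteq> x\<close> y x by (auto simp: adj_def doubleton_eq_iff)
      ultimately have "(adj (E - {{z, y}}))\<^sup>*\<^sup>* z y" by simp
      moreover have "adj E z y" using e z by (simp add: adj_def)
      ultimately show False using acyclic_no_detour[OF acyclic] by blast
    qed
  qed (use e in auto)
qed (use x xy in auto)

lemma connected_edge_leaving:
  assumes sg: "simple_graph V E" and con: "graph_connected V E"
    and S: "S \<subseteq> V" "S \<noteq> {}" "S \<noteq> V"
  shows "\<exists>x y. x \<in> S \<and> y \<in> V - S \<and> {x, y} \<in> E"
proof -
  obtain x0 y0 where x0: "x0 \<in> S" and y0: "y0 \<in> V" "y0 \<notin> S"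
    using S by blast
  then have "(adj E)\<^sup>*\<^sup>* x0 y0"
    using con S(1) unfolding graph_connected_def by blast
  then obtain x y where "x \<in> S" "y \<notin> S" "adj E x y"
    using rtranclp_exits_set[OF _ x0 y0(2)] by blast
  moreover have "y \<in> V" using simple_graph_adj[OF sg \<open>adj E x y\<close>] by blast
  ultimately show ?thesis by (auto simp: adj_def)
qed

lemma tree_grow_induct:
  assumes tree: "is_tree V E" and B: "B \<subseteq> V" "B \<noteq> {}"
    and con_B: "graph_connected B (induced_edges E B)" and P_B: "P B"
    and step: "\<And>S x y. B \<subseteq> S \<Longrightarrow> S \<subseteq> V \<Longrightarrow> graph_connected S (induced_edges E S) \<Longrightarrow>
      x \<in> S \<Longrightarrow> y \<in> V - S \<Longrightarrow>
      induced_edges E (insert y S) = insert {x, y} (induced_edges E S) \<Longrightarrow> P S \<Longrightarrow> P (insert y S)"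
  shows "P V"
proof -
  have sg: "simple_graph V E" and con: "graph_connected V E" and acyclic: "acyclic_graph E"
    using tree by (auto simp: is_tree_def)
  have "P V" if "B \<subseteq> S" "S \<subseteq> V" "graph_connected S (induced_edges E S)" "P S" for S
    using that
  proof (induction "card (V - S)" arbitrary: S rule: less_induct)
    case (less S)
    show ?case
    proof (cases "S = V")
      case False
      have "S \<noteq> {}" using B(2) less.prems(1) by blast
      then obtain x y where x: "x \<in> S" and y: "y \<in> V - S" and xy: "{x, y} \<in> E"
        using connected_edge_leaving[OF sg con less.prems(2) _ False] by blast
      have eq: "induced_edges E (insert y S) = insert {x, y} (induced_edges E S)"
        using y by (intro induced_edges_insert_leaf[OF sg acyclic less.prems(3) x _ xy]) blast
      have "graph_connected (insert y S) (induced_edges E (insert y S))"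
        unfolding eq using graph_connected_insert_edge[OF less.prems(3) x] .
      moreover have "P (insert y S)"
        using step[OF less.prems(1,2,3) x y eq less.prems(4)] .
      moreover have "card (V - insert y S) < card (V - S)"
        using sg y by (intro psubset_card_mono) (auto simp: simple_graph_def)
      ultimately show ?thesis
        using less.hyps less.prems(1,2) y by blast
    qed (use less.prems in simp)
  qed
  then show ?thesis using B con_B P_B by blast
qed

lemma tree_card_edges:
  assumes tree: "is_tree V E"
  shows "card E + 1 = card V"
proof -
  have sg: "simple_graph V E" using tree by (simp add: is_tree_def)
  obtain v0 where v0: "v0 \<in> V" using tree by (auto simp: is_tree_def)
  have no_loop: "induced_edges E {v0} = {}"
    using simple_graph_edge[OF sg] by fastforce
  have "card (induced_edges E V) + 1 = card V"
  proof (rule tree_grow_induct[OF tree, where B = "{v0}" and P = "\<lambda>S. card (induced_edges E S) + 1 = card S"])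
    fix S x y
    assume "S \<subseteq> V" "y \<in> V - S" "card (induced_edges E S) + 1 = card S"
      and "induced_edges E (insert y S) = insert {x, y} (induced_edges E S)"
    moreover have "finite S"
      using \<open>S \<subseteq> V\<close> sg finite_subset by (auto simp: simple_graph_def)
    moreover have "finite (induced_edges E S)"
      using simple_graph_finite_edges[OF sg] by simp
    ultimately show "card (induced_edges E (insert y S)) + 1 = card (insert y S)"
      by simp
  qed (use v0 no_loop in \<open>auto simp: graph_connected_def\<close>)
  then show ?thesis using induced_edges_all[OF sg] by simp
qed

section \<open>Balanced label counts\<close>

definition balanced :: "('b \<Rightarrow> nat) \<Rightarrow> bool" where
  "balanced f \<longleftrightarrow> (\<forall>a b. \<bar>int (f a) - int (f b)\<bar> \<le> 1)"

lemma klein_cordial_labeling_iff_balanced: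
  "klein_cordial_labeling V E l \<longleftrightarrow> balanced (fV V l) \<and> balanced (fE E l)"
  by (auto simp: klein_cordial_labeling_def balanced_def)

lemma balanced_card_minimizers:
  fixes f :: "'b \<Rightarrow> nat"
  assumes fin: "finite (UNIV :: 'b set)" and bal: "balanced f"
  shows "card {a. \<forall>b. f a \<le> f b} = card (UNIV :: 'b set) - sum f UNIV mod card (UNIV :: 'b set)"
proof -
  let ?n = "card (UNIV :: 'b set)"
  obtain a0 where a0: "\<forall>b. f a0 \<le> f b"
    using ex_has_least_nat[of "\<lambda>_. True" _ f] by blast
  define M where "M = {a. \<forall>b. f a \<le> f b}"
  have M: "M = {a. f a = f a0}"
    using a0 unfolding M_def by (auto intro: le_antisym)
  have off_M: "f a = f a0 + 1" if "a \<notin> M" for a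
  proof -
    have "f a \<noteq> f a0" "f a0 \<le> f a" using that a0 unfolding M by auto
    moreover have "\<bar>int (f a) - int (f a0)\<bar> \<le> 1" using bal unfolding balanced_def by blast
    ultimately show ?thesis by linarith
  qed
  have "sum f UNIV = (\<Sum>a\<in>UNIV. f a0 + of_bool (a \<notin> M))"
    using off_M M by (intro sum.cong) auto
  also have "\<dots> = ?n * f a0 + card (UNIV - M)"
    using fin by (simp add: sum.distrib Diff_eq Compl_eq)
  also have "card (UNIV - M) = ?n - card M"
    using fin by (intro card_Diff_subset) (auto intro: finite_subset)
  finally have sum: "sum f UNIV = ?n * f a0 + (?n - card M)" .
  have "finite M" using fin by (rule finite_subset[OF subset_UNIV])
  then have "0 < card M" "card M \<le> ?n"
    using a0 fin by (auto simp: M_def card_gt_0_iff card_mono)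
  then have "sum f UNIV mod ?n = ?n - card M"
    unfolding sum by (simp only: mod_mult_self4 mod_less diff_less)
  with \<open>card M \<le> ?n\<close> show ?thesis
    unfolding M_def[symmetric] by simp
qed

lemma Int_nonempty_if_card_gt_UNIV:
  fixes A B :: "'b set"
  assumes fin: "finite (UNIV :: 'b set)" and card: "card (UNIV :: 'b set) < card A + card B"
  shows "A \<inter> B \<noteq> {}"
proof
  assume "A \<inter> B = {}"
  then have "card (A \<union> B) = card A + card B"
    using fin by (intro card_Un_disjoint) (auto intro: finite_subset)
  moreover have "card (A \<union> B) \<le> card (UNIV :: 'b set)"
    using fin by (intro card_mono) auto
  ultimately show False using card by simp
qed

lemma balanced_add_at_minimizer:
  assumes bal: "balanced f" and min: "\<forall>b. f t \<le> f b"
  shows "balanced (\<lambda>a. f a + of_bool (a = t))"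
  unfolding balanced_def
proof (intro allI)
  fix a b
  have "\<bar>int (f a) - int (f b)\<bar> \<le> 1" "f t \<le> f a" "f t \<le> f b"
    "\<bar>int (f a) - int (f t)\<bar> \<le> 1" "\<bar>int (f b) - int (f t)\<bar> \<le> 1"
    using bal min unfolding balanced_def by blast+
  then show "\<bar>int (f a + of_bool (a = t)) - int (f b + of_bool (b = t))\<bar> \<le> 1"
    by (cases "a = t"; cases "b = t") auto
qed

lemma UNIV_klein: "(UNIV :: klein set) = {(0, 0), (0, 1), (1, 0), (1, 1)}"
  by (auto intro: bit.exhaust)

lemma finite_UNIV_klein: "finite (UNIV :: klein set)"
  unfolding UNIV_klein by simp

lemma card_UNIV_klein: "card (UNIV :: klein set) = 4"
  unfolding UNIV_klein by simp

lemma fV_insert_upd: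
  assumes "finite S" "y \<notin> S"
  shows "fV (insert y S) (l(y := c)) a = fV S l a + of_bool (a = c)"
proof -
  have "{v \<in> insert y S. (l(y := c)) v = a} =
      (if a = c then insert y {v \<in> S. l v = a} else {v \<in> S. l v = a})"
    using assms by auto
  then show ?thesis using assms unfolding fV_def by simp
qed

lemma sum_fV_eq_card: "finite S \<Longrightarrow> (\<Sum>a\<in>UNIV. fV S l a) = card S"
proof (induction S rule: finite_induct)
  case empty
  then show ?case by (simp add: fV_def)
next
  case (insert y S)
  have "fV (insert y S) l a = fV S l a + of_bool (a = l y)" for a
    using fV_insert_upd[OF insert(1,2), of l "l y" a] by simp
  then show ?case using insert finite_UNIV_klein by (simp add: sum.distrib)
qed

lemma fE_insert:
  assumes "finite F" "{u, v} \<notin> F" "u \<noteq> v"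
  shows "fE (insert {u, v} F) l a = fE F l a + of_bool (a = l u + l v)"
proof -
  let ?P = "\<lambda>e. \<exists>u v. e = {u, v} \<and> u \<noteq> v \<and> l u + l v = a"
  have "?P {u, v} \<longleftrightarrow> a = l u + l v"
    using assms(3) by (auto simp: doubleton_eq_iff add.commute)
  moreover have "{e \<in> insert d F. Q e} = (if Q d then insert d {e \<in> F. Q e} else {e \<in> F. Q e})"
    for d and Q :: "'a set \<Rightarrow> bool"
    by auto
  ultimately show ?thesis using assms unfolding fE_def by simp
qed

lemma fE_cong:
  assumes "\<forall>e\<in>F. e \<subseteq> S" "\<forall>v\<in>S. l' v = l v"
  shows "fE F l' a = fE F l a"
proof -
  have label: "l' u + l' v = l u + l v" if "{u, v} \<in> F" for u v
  proof -
    have "u \<in> S" "v \<in> S" using assms(1) that by blast+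
    then show ?thesis using assms(2) by simp
  qed
  have "(\<exists>u v. e = {u, v} \<and> u \<noteq> v \<and> l' u + l' v = a) \<longleftrightarrow>
      (\<exists>u v. e = {u, v} \<and> u \<noteq> v \<and> l u + l v = a)" if "e \<in> F" for e
    using label that by (intro ex_cong1 conj_cong refl) simp
  then show ?thesis unfolding fE_def by (intro arg_cong[where f = card] Collect_cong conj_cong refl)
qed

lemma sum_fE_eq_card:
  assumes "simple_graph V E"
  shows "(\<Sum>a\<in>UNIV. fE E l a) = card E"
proof -
  have "finite F \<Longrightarrow> F \<subseteq> E \<Longrightarrow> (\<Sum>a\<in>UNIV. fE F l a) = card F" for F
  proof (induction F rule: finite_induct)
    case empty
    then show ?case by (simp add: fE_def)
  next
    case (insert e F)
    then obtain u v where "e = {u, v}" "u \<noteq> v"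
      using simple_graph_edge[OF assms] by blast
    with insert have "fE (insert e F) l a = fE F l a + of_bool (a = l u + l v)" for a
      using fE_insert[of F u v] by simp
    then show ?case using insert finite_UNIV_klein by (simp add: sum.distrib)
  qed
  then show ?thesis using simple_graph_finite_edges[OF assms] by blast
qed

lemma klein_cordial_add_leaf:
  assumes tree: "is_tree T F" and cordial: "klein_cordial T F" and order: "card T mod 4 \<noteq> 3"
    and x: "x \<in> T" and y: "y \<notin> T"
  shows "klein_cordial (insert y T) (insert {x, y} F)"
proof -
  obtain l where balV: "balanced (fV T l)" and balE: "balanced (fE F l)"
    using cordial unfolding klein_cordial_def klein_cordial_labeling_iff_balanced by blast
  have sg: "simple_graph T F" using tree by (simp add: is_tree_def)
  have finT: "finite T" using sg by (simp add: simple_graph_def)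
  define MV where "MV = {a. \<forall>b. fV T l a \<le> fV T l b}"
  define ME where "ME = {a. \<forall>b. fE F l a \<le> fE F l b}"
  have "card MV = 4 - card T mod 4"
    using balanced_card_minimizers[OF finite_UNIV_klein balV]
    unfolding MV_def sum_fV_eq_card[OF finT] card_UNIV_klein .
  moreover have "card ME = 4 - card F mod 4"
    using balanced_card_minimizers[OF finite_UNIV_klein balE]
    unfolding ME_def sum_fE_eq_card[OF sg] card_UNIV_klein .
  moreover have "card F + 1 = card T" by (rule tree_card_edges[OF tree])
  moreover have "card ((+) (l x) ` MV) = card MV" by (simp add: card_image inj_on_def)
  ultimately have "card (UNIV :: klein set) < card ((+) (l x) ` MV) + card ME"
    using order unfolding card_UNIV_klein by presburger
  then obtain c where c: "c \<in> MV" "l x + c \<in> ME"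
    using Int_nonempty_if_card_gt_UNIV[OF finite_UNIV_klein] by blast
  define l' where "l' = l(y := c)"
  have "{x, y} \<notin> F" "x \<noteq> y" using sg x y by (auto simp: simple_graph_def)
  have "fV (insert y T) l' a = fV T l a + of_bool (a = c)" for a
    unfolding l'_def by (rule fV_insert_upd[OF finT y])
  moreover have "fE (insert {x, y} F) l' a = fE F l a + of_bool (a = l x + c)" for a
  proof -
    have "fE (insert {x, y} F) l' a = fE F l' a + of_bool (a = l' x + l' y)"
      by (rule fE_insert[OF simple_graph_finite_edges[OF sg] \<open>{x, y} \<notin> F\<close> \<open>x \<noteq> y\<close>])
    moreover have "fE F l' a = fE F l a"
      using sg y by (intro fE_cong[of F T]) (auto simp: simple_graph_def l'_def)
    ultimately show ?thesis using \<open>x \<noteq> y\<close> by (simp add: l'_def)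
  qed
  moreover have "balanced (\<lambda>a. fV T l a + of_bool (a = c))"
    using balanced_add_at_minimizer[OF balV] c(1) unfolding MV_def by blast
  moreover have "balanced (\<lambda>a. fE F l a + of_bool (a = l x + c))"
    using balanced_add_at_minimizer[OF balE] c(2) unfolding ME_def by blast
  ultimately have "klein_cordial_labeling (insert y T) (insert {x, y} F) l'"
    unfolding klein_cordial_labeling_iff_balanced by presburger
  then show ?thesis unfolding klein_cordial_def by blast
qed

theorem lemma4p3:
  fixes V :: "'a set" and E :: "'a set set" and V' :: "'a set" and E' :: "'a set set"
    and k :: nat
  assumes "is_tree V E" and "klein_cordial V E" and "card V = 4 * k"
    and "is_tree V' E'" and "induced_subgraph V E V' E'" and "card V' \<le> 4 * k + 3"
  shows "klein_cordial V' E'"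
proof -
  have "V \<subseteq> V'" and E: "E = induced_edges E' V"
    using assms(5) by (auto simp: induced_subgraph_def)
  have finV': "finite V'" using assms(4) by (simp add: is_tree_def simple_graph_def)
  have "klein_cordial V' (induced_edges E' V')"
  proof (rule tree_grow_induct[OF assms(4) \<open>V \<subseteq> V'\<close>])
    show "V \<noteq> {}" "graph_connected V (induced_edges E' V)" "klein_cordial V (induced_edges E' V)"
      using assms(1,2) E by (auto simp: is_tree_def)
  next
    fix S x y
    assume S: "V \<subseteq> S" "S \<subseteq> V'" "graph_connected S (induced_edges E' S)"
      and x: "x \<in> S" and y: "y \<in> V' - S"
      and grow: "induced_edges E' (insert y S) = insert {x, y} (induced_edges E' S)"
      and cordial: "klein_cordial S (induced_edges E' S)"
    have finS: "finite S" using S(2) finV' by (rule finite_subset)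
    have "4 * k \<le> card S" using card_mono[OF finS S(1)] assms(3) by simp
    moreover have "card S + 1 \<le> 4 * k + 3"
      using card_mono[OF finV', of "insert y S"] S(2) y finS assms(6) by simp
    ultimately have "card S mod 4 \<noteq> 3" by presburger
    moreover have "is_tree S (induced_edges E' S)"
      using is_tree_induced[OF assms(4) S(2) _ S(3)] x by blast
    ultimately show "klein_cordial (insert y S) (induced_edges E' (insert y S))"
      unfolding grow using y by (intro klein_cordial_add_leaf[OF _ cordial _ x]) auto
  qed
  moreover have "simple_graph V' E'" using assms(4) by (simp add: is_tree_def)
  ultimately show ?thesis by (simp add: induced_edges_all)
qed

end
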